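(* Let $\mathcal{S},\mathcal{T},\mathcal{U},\mathcal{B}$ be tile sets consisting only of exact tiles, with mutually consistent frequencies. Then \[ d(\mathcal{T},\mathcal{U};\mathcal{B})\le d(\mathcal{T},\mathcal{S};\mathcal{B})+d(\mathcal{S},\mathcal{U};\mathcal{B}). \]
   Context: Fix $n,m\ge1$; $\mathcal{D}$ is the set of $n\times m$ binary matrices. A tile is $T=(t(T),a(T))$ with nonempty $t(T)\subseteq\{1..n\}$, $a(T)\subseteq\{1..m\}$, $\mathrm{area}(T)=t(T)\times a(T)$. $\mathrm{fr}(T;D)=\frac1{|\mathrm{area}(T)|}\sum_{(i,j)\in\mathrm{area}(T)}D(i,j)$, $\mathrm{fr}(T;p)=\sum_Dp(D)\mathrm{fr}(T;D)$. Each tile carries a target frequency $\alpha_T$; tile sets are consistent if some distribution on $\mathcal{D}$ attains all target frequencies simultaneously. For a tile set $\mathcal{T}$, $p^*_{\mathcal{T}}$ is the entropy-maximising distribution among those with $\mathrm{fr}(T;p)=\alpha_T$ for all $T\in\mathcal{T}$. $\mathrm{KL}(\mathcal{T}\|\mathcal{U})=\mathrm{KL}(p^*_{\mathcal{T}}\|p^*_{\mathcal{U}})$. A tile is exact if its frequency is $0$ or $1$. With $\mathcal{M}=\mathcal{T}\cup\mathcal{U}\cup\mathcal{B}$, $d(\mathcal{T},\mathcal{U};\mathcal{B})=\frac{\mathrm{KL}(\mathcal{M}\|\mathcal{U}\cup\mathcal{B})+\mathrm{KL}(\mathcal{M}\|\mathcal{T}\cup\mathcal{B})}{\mathrm{KL}(\mathcal{M}\|\mathcal{B})}$,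 defined as $1$ if $\mathrm{KL}(\mathcal{M}\|\mathcal{B})=0$. *)

theory Defs
  imports Complex_Main
begin

text \<open>Binary n x m matrices: D i j = True means entry 1; entries outside {1..n}x{1..m} are False.\<close>
type_synonym matrix = "nat \<Rightarrow> nat \<Rightarrow> bool"
type_synonym tile = "nat set \<times> nat set"

definition mats :: "nat \<Rightarrow> nat \<Rightarrow> matrix set" where
  "mats n m = {D. \<forall>i j. D i j \<longrightarrow> i \<in> {1..n} \<and> j \<in> {1..m}}"

definition is_tile :: "nat \<Rightarrow> nat \<Rightarrow> tile \<Rightarrow> bool" where
  "is_tile n m T \<longleftrightarrow> fst T \<noteq> {} \<and> snd T \<noteq> {} \<and> fst T \<subseteq> {1..n} \<and> snd T \<subseteq> {1..m}"

definition area :: "tile \<Rightarrow> (nat \<times> nat) set" where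
  "area T = fst T \<times> snd T"

definition fr_mat :: "tile \<Rightarrow> matrix \<Rightarrow> real" where
  "fr_mat T D = (\<Sum>(i,j)\<in>area T. if D i j then 1 else 0) / real (card (area T))"

definition is_dist :: "nat \<Rightarrow> nat \<Rightarrow> (matrix \<Rightarrow> real) \<Rightarrow> bool" where
  "is_dist n m p \<longleftrightarrow> (\<forall>D. 0 \<le> p D) \<and> (\<forall>D. D \<notin> mats n m \<longrightarrow> p D = 0)
     \<and> (\<Sum>D\<in>mats n m. p D) = 1"

definition fr_dist :: "nat \<Rightarrow> nat \<Rightarrow> tile \<Rightarrow> (matrix \<Rightarrow> real) \<Rightarrow> real" where
  "fr_dist n m T p = (\<Sum>D\<in>mats n m. p D * fr_mat T D)"

definition feasible :: "nat \<Rightarrow> nat \<Rightarrow> (tile \<Rightarrow> real) \<Rightarrow> tile set \<Rightarrow> (matrix \<Rightarrow> real) set" where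
  "feasible n m alpha \<T> = {p. is_dist n m p \<and> (\<forall>T\<in>\<T>. fr_dist n m T p = alpha T)}"

definition entropy :: "nat \<Rightarrow> nat \<Rightarrow> (matrix \<Rightarrow> real) \<Rightarrow> real" where
  "entropy n m p = (\<Sum>D\<in>mats n m. if p D = 0 then 0 else - (p D * ln (p D)))"

definition maxent :: "nat \<Rightarrow> nat \<Rightarrow> (tile \<Rightarrow> real) \<Rightarrow> tile set \<Rightarrow> (matrix \<Rightarrow> real)" where
  "maxent n m alpha \<T> = (THE p. p \<in> feasible n m alpha \<T> \<and>
      (\<forall>q\<in>feasible n m alpha \<T>. entropy n m q \<le> entropy n m p))"

definition KL :: "nat \<Rightarrow> nat \<Rightarrow> (matrix \<Rightarrow> real) \<Rightarrow> (matrix \<Rightarrow> real) \<Rightarrow> real" where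
  "KL n m p q = (\<Sum>D\<in>mats n m. if p D = 0 then 0 else p D * ln (p D / q D))"

definition KLt :: "nat \<Rightarrow> nat \<Rightarrow> (tile \<Rightarrow> real) \<Rightarrow> tile set \<Rightarrow> tile set \<Rightarrow> real" where
  "KLt n m alpha \<T> \<U> = KL n m (maxent n m alpha \<T>) (maxent n m alpha \<U>)"

definition dd :: "nat \<Rightarrow> nat \<Rightarrow> (tile \<Rightarrow> real) \<Rightarrow> tile set \<Rightarrow> tile set \<Rightarrow> tile set \<Rightarrow> real" where
  "dd n m alpha \<T> \<U> \<B> =
     (let \<M> = \<T> \<union> \<U> \<union> \<B>; den = KLt n m alpha \<M> \<B> in
      if den = 0 then 1
      else (KLt n m alpha \<M> (\<U> \<union> \<B>) + KLt n m alpha \<M> (\<T> \<union> \<B>)) / den)"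

definition exact :: "(tile \<Rightarrow> real) \<Rightarrow> tile \<Rightarrow> bool" where
  "exact alpha T \<longleftrightarrow> alpha T = 0 \<or> alpha T = 1"

end

theory Submission
  imports Defs
begin

text \<open>For exact tiles a distribution attains the target frequencies iff it is supported on the
matrices that agree with one fixed consistent matrix on every cell covered by the tiles. The
maximum-entropy distribution is therefore uniform on that set, which has \<open>2^k\<close> elements when
\<open>k\<close> cells are uncovered, so each KL divergence in d is ln 2 times a number of cells. Consequently
d(T,U;B) is the Jaccard distance between the cells covered by T and by U but not by B, and the
Jaccard distance satisfies the triangle inequality.\<close>

definition entropy_term :: "real \<Rightarrow> real" where
  "entropy_term q = (if q = 0 then 0 else - (q * ln q))"

lemma entropy_eq_sum_entropy_term: "entropy n m p = (\<Sum>D\<in>mats n m. entropy_term (p D))"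
  by (simp add: entropy_def entropy_term_def)

text \<open>The gap to the tangent line of the concave function \<open>q \<mapsto> - q ln q\<close> at \<open>1/k\<close>.\<close>
lemma tangent_minus_entropy_term:
  assumes "0 < q" and "0 < k"
  shows "1/k - q + q * ln k - entropy_term q = q * ((1 / (q*k) - 1) - ln (1 / (q*k)))"
  using assms by (simp add: entropy_term_def ln_div ln_mult field_simps)

lemma entropy_term_le_tangent:
  assumes "0 \<le> q" and "0 < k"
  shows "entropy_term q \<le> 1/k - q + q * ln k"
proof (cases "q = 0")
  case False
  with assms have "0 < q" "0 < 1 / (q*k)" by auto
  then show ?thesis
    using tangent_minus_entropy_term[OF \<open>0 < q\<close> \<open>0 < k\<close>] ln_le_minus_one[of "1 / (q*k)"]
    by (smt (verit) mult_nonneg_nonneg)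
qed (use assms in \<open>simp add: entropy_term_def\<close>)

lemma entropy_term_less_tangent:
  assumes "0 \<le> q" and "0 < k" and "q \<noteq> 1/k"
  shows "entropy_term q < 1/k - q + q * ln k"
proof (cases "q = 0")
  case False
  with assms have "0 < q" "0 < 1 / (q*k)" by auto
  moreover have "1 / (q*k) \<noteq> 1"
    using assms by (auto simp: field_simps)
  ultimately have "ln (1 / (q*k)) < 1 / (q*k) - 1"
    using ln_le_minus_one ln_eq_minus_one by (metis order_less_le)
  then show ?thesis
    using tangent_minus_entropy_term[OF \<open>0 < q\<close> \<open>0 < k\<close>] \<open>0 < q\<close>
    by (smt (verit) mult_pos_pos)
qed (use assms in \<open>simp add: entropy_term_def\<close>)

lemma finite_mats: "finite (mats n m)"
proof -
  have "mats n m \<subseteq> (\<lambda>S i j. (i,j) \<in> S) ` Pow ({1..n} \<times> {1..m})"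
  proof
    fix D assume "D \<in> mats n m"
    then have "{(i,j). D i j} \<in> Pow ({1..n} \<times> {1..m})"
      by (auto simp: mats_def)
    moreover have "D = (\<lambda>i j. (i,j) \<in> {(i,j). D i j})" by auto
    ultimately show "D \<in> (\<lambda>S i j. (i,j) \<in> S) ` Pow ({1..n} \<times> {1..m})" by blast
  qed
  then show ?thesis by (rule finite_subset) auto
qed

lemma is_dist_nonzero_in_mats: "is_dist n m p \<Longrightarrow> p D \<noteq> 0 \<Longrightarrow> D \<in> mats n m"
  unfolding is_dist_def by blast

definition uniform_on :: "matrix set \<Rightarrow> matrix \<Rightarrow> real" where
  "uniform_on S D = (if D \<in> S then 1 / real (card S) else 0)"

lemma is_dist_uniform_on:
  assumes "S \<subseteq> mats n m" and "S \<noteq> {}"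
  shows "is_dist n m (uniform_on S)"
proof -
  have "finite S" using assms(1) finite_mats finite_subset by blast
  have "(\<Sum>D\<in>mats n m. uniform_on S D) = (\<Sum>D\<in>S. uniform_on S D)"
    using assms(1) finite_mats by (intro sum.mono_neutral_right) (auto simp: uniform_on_def)
  also have "\<dots> = 1" using \<open>finite S\<close> assms(2) by (simp add: uniform_on_def)
  finally show ?thesis
    using assms(1) by (auto simp: is_dist_def uniform_on_def)
qed

lemma entropy_uniform_on:
  assumes "S \<subseteq> mats n m" and "S \<noteq> {}"
  shows "entropy n m (uniform_on S) = ln (real (card S))"
proof -
  have "finite S" using assms(1) finite_mats finite_subset by blast
  have "entropy n m (uniform_on S) = (\<Sum>D\<in>S. entropy_term (uniform_on S D))"
    unfolding entropy_eq_sum_entropy_term using assms(1) finite_mats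
    by (intro sum.mono_neutral_right) (auto simp: entropy_term_def uniform_on_def)
  also have "\<dots> = (\<Sum>D\<in>S. - (1 / real (card S) * ln (1 / real (card S))))"
    using \<open>finite S\<close> assms(2) by (intro sum.cong) (auto simp: entropy_term_def uniform_on_def)
  also have "\<dots> = ln (real (card S))"
    using \<open>finite S\<close> assms(2) by (simp add: ln_div)
  finally show ?thesis .
qed

text \<open>Gibbs' inequality against the uniform distribution, obtained by summing the tangent-line
bound with \<open>k = |S|\<close>; the bound is attained only where \<open>q = 1/|S|\<close>.\<close>
lemma entropy_le_ln_card:
  assumes S: "S \<subseteq> mats n m" "S \<noteq> {}" and q: "is_dist n m q"
    and supp: "\<forall>D. q D \<noteq> 0 \<longrightarrow> D \<in> S"
  shows "entropy n m q \<le> ln (real (card S))"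
    and "q \<noteq> uniform_on S \<Longrightarrow> entropy n m q < ln (real (card S))"
proof -
  have "finite S" using S(1) finite_mats finite_subset by blast
  define k where "k = real (card S)"
  have "0 < k" using \<open>finite S\<close> S(2) by (simp add: k_def card_gt_0_iff)
  have q_nonneg: "\<And>D. 0 \<le> q D" using q by (simp add: is_dist_def)
  have entropy_on_S: "entropy n m q = (\<Sum>D\<in>S. entropy_term (q D))"
    unfolding entropy_eq_sum_entropy_term using S(1) finite_mats supp
    by (intro sum.mono_neutral_right) (auto simp: entropy_term_def)
  have "(\<Sum>D\<in>mats n m. q D) = (\<Sum>D\<in>S. q D)"
    using S(1) finite_mats supp by (intro sum.mono_neutral_right) auto
  then have "(\<Sum>D\<in>S. q D) = 1" using q by (simp add: is_dist_def)
  then have tangent_sum: "(\<Sum>D\<in>S. 1/k - q D + q D * ln k) = ln k"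
    using \<open>0 < k\<close> by (simp add: sum.distrib sum_subtractf sum_distrib_right[symmetric] k_def)
  have "(\<Sum>D\<in>S. entropy_term (q D)) \<le> (\<Sum>D\<in>S. 1/k - q D + q D * ln k)"
    by (intro sum_mono entropy_term_le_tangent q_nonneg \<open>0 < k\<close>)
  then show "entropy n m q \<le> ln (real (card S))"
    using entropy_on_S tangent_sum k_def by simp
  assume "q \<noteq> uniform_on S"
  then obtain D0 where "q D0 \<noteq> uniform_on S D0" by auto
  then have "D0 \<in> S" "q D0 \<noteq> 1/k"
    using supp by (auto simp: uniform_on_def k_def split: if_splits)
  have "(\<Sum>D\<in>S. entropy_term (q D)) < (\<Sum>D\<in>S. 1/k - q D + q D * ln k)"
    using \<open>finite S\<close> entropy_term_le_tangent[OF q_nonneg \<open>0 < k\<close>]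
      entropy_term_less_tangent[OF q_nonneg \<open>0 < k\<close> \<open>q D0 \<noteq> 1/k\<close>] \<open>D0 \<in> S\<close>
    by (intro sum_strict_mono_ex1) auto
  then show "entropy n m q < ln (real (card S))"
    using entropy_on_S tangent_sum k_def by simp
qed

lemma KL_uniform_on:
  assumes "A \<subseteq> B" and "A \<noteq> {}" and "B \<subseteq> mats n m"
  shows "KL n m (uniform_on A) (uniform_on B) = ln (real (card B) / real (card A))"
proof -
  have "finite B" using assms(3) finite_mats finite_subset by blast
  then have "0 < card A" "0 < card B"
    using assms(1,2) by (auto simp: card_gt_0_iff intro: finite_subset)
  have "KL n m (uniform_on A) (uniform_on B) =
      (\<Sum>D\<in>A. 1 / real (card A) * ln ((1 / real (card A)) / (1 / real (card B))))"
    unfolding KL_def using finite_mats assms \<open>0 < card A\<close>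
    by (intro sum.mono_neutral_cong_right) (auto simp: uniform_on_def)
  also have "\<dots> = ln (real (card B) / real (card A))"
    using \<open>0 < card A\<close> by simp
  finally show ?thesis .
qed

definition consistent_mats :: "nat \<Rightarrow> nat \<Rightarrow> (tile \<Rightarrow> real) \<Rightarrow> tile set \<Rightarrow> matrix set" where
  "consistent_mats n m alpha X = {D \<in> mats n m. \<forall>T\<in>X. fr_mat T D = alpha T}"

lemma consistent_mats_antimono:
  "X \<subseteq> Y \<Longrightarrow> consistent_mats n m alpha Y \<subseteq> consistent_mats n m alpha X"
  by (auto simp: consistent_mats_def)

lemma fr_mat_nonneg: "0 \<le> fr_mat T D"
  unfolding fr_mat_def by (intro divide_nonneg_nonneg sum_nonneg) auto

lemma fr_mat_le_1: "fr_mat T D \<le> 1"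
proof -
  have "(\<Sum>(i,j)\<in>area T. if D i j then 1 else 0) \<le> (\<Sum>c\<in>area T. 1::real)"
    by (intro sum_mono) auto
  then show ?thesis
    unfolding fr_mat_def by (auto simp: divide_le_eq_1)
qed

lemma sum_weighted_eq_0_imp_eq_0:
  fixes w f :: "'a \<Rightarrow> real"
  assumes "finite A" and "\<forall>x\<in>A. 0 \<le> w x \<and> 0 \<le> f x" and "(\<Sum>x\<in>A. w x * f x) = 0"
    and "x \<in> A" and "w x \<noteq> 0"
  shows "f x = 0"
  using assms sum_nonneg_eq_0_iff[OF assms(1), of "\<lambda>x. w x * f x"] by auto

text \<open>An exact frequency is an average of per-matrix frequencies in [0,1] at an endpoint, so it
is attained by every matrix in the support.\<close>
lemma fr_mat_eq_on_support:
  assumes p: "is_dist n m p" and "fr_dist n m T p = alpha T" and "exact alpha T" and "p D \<noteq> 0"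
  shows "fr_mat T D = alpha T"
proof -
  have D: "D \<in> mats n m" using is_dist_nonzero_in_mats[OF p \<open>p D \<noteq> 0\<close>] .
  have p_nonneg: "\<forall>D. 0 \<le> p D" and p_sum: "(\<Sum>D\<in>mats n m. p D) = 1"
    using p by (auto simp: is_dist_def)
  have fr: "(\<Sum>D\<in>mats n m. p D * fr_mat T D) = alpha T"
    using assms(2) by (simp add: fr_dist_def)
  consider "alpha T = 0" | "alpha T = 1" using \<open>exact alpha T\<close> by (auto simp: exact_def)
  then show ?thesis
  proof cases
    case 1
    then show ?thesis
      using sum_weighted_eq_0_imp_eq_0[of "mats n m" p "fr_mat T"] finite_mats D \<open>p D \<noteq> 0\<close>
        fr p_nonneg fr_mat_nonneg
      by auto
  next
    case 2
    have "(\<Sum>D\<in>mats n m. p D * (1 - fr_mat T D)) = 0"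
      using fr p_sum 2 by (simp add: right_diff_distrib sum_subtractf)
    then show ?thesis
      using sum_weighted_eq_0_imp_eq_0[of "mats n m" p "\<lambda>D. 1 - fr_mat T D"] finite_mats D
        \<open>p D \<noteq> 0\<close> 2 p_nonneg fr_mat_le_1
      by (smt (verit))
  qed
qed

lemma feasible_exact_iff:
  assumes "\<forall>T\<in>X. exact alpha T"
  shows "p \<in> feasible n m alpha X \<longleftrightarrow>
    is_dist n m p \<and> (\<forall>D. p D \<noteq> 0 \<longrightarrow> D \<in> consistent_mats n m alpha X)"
proof
  assume "p \<in> feasible n m alpha X"
  then show "is_dist n m p \<and> (\<forall>D. p D \<noteq> 0 \<longrightarrow> D \<in> consistent_mats n m alpha X)"
    using assms fr_mat_eq_on_support is_dist_nonzero_in_mats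
    by (fastforce simp: feasible_def consistent_mats_def)
next
  assume p: "is_dist n m p \<and> (\<forall>D. p D \<noteq> 0 \<longrightarrow> D \<in> consistent_mats n m alpha X)"
  have "fr_dist n m T p = alpha T" if "T \<in> X" for T
  proof -
    have "fr_dist n m T p = (\<Sum>D\<in>mats n m. p D * alpha T)"
      unfolding fr_dist_def
      using p that by (intro sum.cong) (auto simp: consistent_mats_def)
    also have "\<dots> = alpha T"
      using p by (simp add: is_dist_def sum_distrib_right[symmetric])
    finally show ?thesis .
  qed
  then show "p \<in> feasible n m alpha X"
    using p by (simp add: feasible_def)
qed

lemma maxent_exact:
  assumes "\<forall>T\<in>X. exact alpha T" and ne: "consistent_mats n m alpha X \<noteq> {}"
  shows "maxent n m alpha X = uniform_on (consistent_mats n m alpha X)"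
proof -
  let ?S = "consistent_mats n m alpha X"
  have S: "?S \<subseteq> mats n m" by (auto simp: consistent_mats_def)
  note feasible_iff = feasible_exact_iff[OF assms(1)]
  have uniform_feasible: "uniform_on ?S \<in> feasible n m alpha X"
    using feasible_iff is_dist_uniform_on[OF S ne] by (simp add: uniform_on_def)
  have entropy_feasible_le: "entropy n m q \<le> entropy n m (uniform_on ?S)"
    if "q \<in> feasible n m alpha X" for q
    using that entropy_le_ln_card(1)[OF S ne] entropy_uniform_on[OF S ne] feasible_iff by auto
  show ?thesis
    unfolding maxent_def
  proof (rule the_equality)
    fix p
    assume p: "p \<in> feasible n m alpha X \<and> (\<forall>q\<in>feasible n m alpha X. entropy n m q \<le> entropy n m p)"
    then have "\<not> entropy n m p < ln (real (card ?S))"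
      using uniform_feasible entropy_uniform_on[OF S ne] by fastforce
    then show "p = uniform_on ?S"
      using entropy_le_ln_card(2)[OF S ne] p feasible_iff by blast
  qed (use uniform_feasible entropy_feasible_le in blast)
qed

lemma fr_mat_eq_card:
  assumes "finite (area T)"
  shows "fr_mat T D = real (card {c \<in> area T. D (fst c) (snd c)}) / real (card (area T))"
proof -
  have "(\<Sum>(i,j)\<in>area T. if D i j then 1 else 0)
      = (\<Sum>c\<in>area T. of_bool (D (fst c) (snd c)) :: real)"
    by (simp add: case_prod_beta of_bool_def)
  also have "\<dots> = real (card {c \<in> area T. D (fst c) (snd c)})"
    using assms by (simp add: Int_def)
  finally show ?thesis by (simp add: fr_mat_def)
qed

lemma
  assumes "is_tile n m T"
  shows fr_mat_eq_0_iff: "fr_mat T D = 0 \<longleftrightarrow> (\<forall>(i,j)\<in>area T. \<not> D i j)"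
    and fr_mat_eq_1_iff: "fr_mat T D = 1 \<longleftrightarrow> (\<forall>(i,j)\<in>area T. D i j)"
proof -
  let ?F = "{c \<in> area T. D (fst c) (snd c)}"
  have "finite (area T)" "area T \<noteq> {}"
    using assms by (auto simp: is_tile_def area_def intro: finite_subset)
  then have "0 < card (area T)" "finite ?F" by (auto simp: card_gt_0_iff)
  have "fr_mat T D = 0 \<longleftrightarrow> card ?F = 0"
    using \<open>finite (area T)\<close> \<open>area T \<noteq> {}\<close> by (simp add: fr_mat_eq_card)
  also have "\<dots> \<longleftrightarrow> (\<forall>c\<in>area T. \<not> D (fst c) (snd c))"
    using \<open>finite ?F\<close> by auto
  finally show "fr_mat T D = 0 \<longleftrightarrow> (\<forall>(i,j)\<in>area T. \<not> D i j)"
    by (simp add: case_prod_beta)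
  have "fr_mat T D = 1 \<longleftrightarrow> card ?F = card (area T)"
    using \<open>finite (area T)\<close> \<open>0 < card (area T)\<close> by (auto simp: fr_mat_eq_card)
  also have "\<dots> \<longleftrightarrow> ?F = area T"
    using \<open>finite (area T)\<close> by (metis (no_types, lifting) card_subset_eq mem_Collect_eq subsetI)
  also have "\<dots> \<longleftrightarrow> (\<forall>c\<in>area T. D (fst c) (snd c))"
    by blast
  finally show "fr_mat T D = 1 \<longleftrightarrow> (\<forall>(i,j)\<in>area T. D i j)"
    by (simp add: case_prod_beta)
qed

lemma fr_mat_exact_iff:
  assumes "is_tile n m T" and "exact alpha T" and "fr_mat T D0 = alpha T"
  shows "fr_mat T D = alpha T \<longleftrightarrow> (\<forall>(i,j)\<in>area T. D i j = D0 i j)"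
proof -
  consider "alpha T = 0" | "alpha T = 1" using \<open>exact alpha T\<close> by (auto simp: exact_def)
  then show ?thesis
  proof cases
    case 1
    then have "\<forall>(i,j)\<in>area T. \<not> D0 i j"
      using assms(3) fr_mat_eq_0_iff[OF assms(1)] by simp
    then show ?thesis
      using 1 fr_mat_eq_0_iff[OF assms(1), of D] by auto
  next
    case 2
    then have "\<forall>(i,j)\<in>area T. D0 i j"
      using assms(3) fr_mat_eq_1_iff[OF assms(1)] by simp
    then show ?thesis
      using 2 fr_mat_eq_1_iff[OF assms(1), of D] by auto
  qed
qed

definition cells :: "tile set \<Rightarrow> (nat \<times> nat) set" where
  "cells X = (\<Union>T\<in>X. area T)"

lemma cells_Un: "cells (X \<union> Y) = cells X \<union> cells Y"
  by (auto simp: cells_def)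

lemma cells_subset_grid: "\<forall>T\<in>X. is_tile n m T \<Longrightarrow> cells X \<subseteq> {1..n} \<times> {1..m}"
  unfolding cells_def is_tile_def area_def by fast

lemma finite_cells: "\<forall>T\<in>X. is_tile n m T \<Longrightarrow> finite (cells X)"
  by (rule finite_subset[OF cells_subset_grid]) auto

lemma consistent_mats_eq_agree_on_cells:
  assumes "\<forall>T\<in>X. is_tile n m T \<and> exact alpha T" and "D0 \<in> consistent_mats n m alpha X"
  shows "consistent_mats n m alpha X = {D \<in> mats n m. \<forall>(i,j)\<in>cells X. D i j = D0 i j}"
proof -
  have "fr_mat T D = alpha T \<longleftrightarrow> (\<forall>(i,j)\<in>area T. D i j = D0 i j)" if "T \<in> X" for T D
    using assms that by (intro fr_mat_exact_iff) (auto simp: consistent_mats_def)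
  then show ?thesis
    by (auto simp: consistent_mats_def cells_def)
qed

text \<open>Such a matrix is determined by the set of its true entries in the free cells.\<close>
lemma card_mats_agree_on:
  assumes D0: "D0 \<in> mats n m"
  shows "card {D \<in> mats n m. \<forall>(i,j)\<in>F. D i j = D0 i j} = 2 ^ card ({1..n} \<times> {1..m} - F)"
proof -
  let ?G = "{1..n} \<times> {1..m}"
  define free_ones where "free_ones D = {(i,j) \<in> ?G - F. D i j}" for D :: matrix
  define extend where "extend R = (\<lambda>i j. (i,j) \<in> R \<or> ((i,j) \<in> F \<and> D0 i j))" for R
  have "bij_betw free_ones {D \<in> mats n m. \<forall>(i,j)\<in>F. D i j = D0 i j} (Pow (?G - F))"
  proof (rule bij_betw_byWitness[where f' = extend])
    show "\<forall>D\<in>{D \<in> mats n m. \<forall>(i,j)\<in>F. D i j = D0 i j}. extend (free_ones D) = D"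
      using D0 by (auto simp: extend_def free_ones_def mats_def fun_eq_iff)
    show "\<forall>R\<in>Pow (?G - F). free_ones (extend R) = R"
      by (auto simp: free_ones_def extend_def)
    show "free_ones ` {D \<in> mats n m. \<forall>(i,j)\<in>F. D i j = D0 i j} \<subseteq> Pow (?G - F)"
      by (auto simp: free_ones_def)
    show "extend ` Pow (?G - F) \<subseteq> {D \<in> mats n m. \<forall>(i,j)\<in>F. D i j = D0 i j}"
      using D0 by (auto simp: extend_def mats_def)
  qed
  then have "card {D \<in> mats n m. \<forall>(i,j)\<in>F. D i j = D0 i j} = card (Pow (?G - F))"
    by (rule bij_betw_same_card)
  also have "\<dots> = 2 ^ card (?G - F)"
    by (rule card_Pow) blast
  finally show ?thesis .
qed

lemma card_consistent_mats:
  assumes "\<forall>T\<in>X. is_tile n m T \<and> exact alpha T" and "D0 \<in> consistent_mats n m alpha X"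
  shows "card (consistent_mats n m alpha X) = 2 ^ card ({1..n} \<times> {1..m} - cells X)"
proof -
  have "D0 \<in> mats n m"
    using assms(2) by (simp add: consistent_mats_def)
  then show ?thesis
    unfolding consistent_mats_eq_agree_on_cells[OF assms] by (rule card_mats_agree_on)
qed

lemma KLt_exact:
  assumes tiles: "\<forall>T\<in>M. is_tile n m T \<and> exact alpha T"
    and D0: "D0 \<in> consistent_mats n m alpha M" and "Y \<subseteq> M"
  shows "KLt n m alpha M Y = real (card (cells M - cells Y)) * ln 2"
proof -
  let ?G = "{1..n} \<times> {1..m}"
  have tiles_Y: "\<forall>T\<in>Y. is_tile n m T \<and> exact alpha T"
    using tiles \<open>Y \<subseteq> M\<close> by blast
  have sub: "consistent_mats n m alpha M \<subseteq> consistent_mats n m alpha Y"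
    using \<open>Y \<subseteq> M\<close> by (rule consistent_mats_antimono)
  have D0_Y: "D0 \<in> consistent_mats n m alpha Y" using D0 sub by blast
  have "consistent_mats n m alpha M \<noteq> {}" using D0 by blast
  moreover have "consistent_mats n m alpha Y \<noteq> {}" using D0_Y by blast
  moreover have "consistent_mats n m alpha Y \<subseteq> mats n m" by (auto simp: consistent_mats_def)
  ultimately have KL_card: "KLt n m alpha M Y =
      ln (real (card (consistent_mats n m alpha Y)) / real (card (consistent_mats n m alpha M)))"
    unfolding KLt_def using tiles tiles_Y sub by (simp add: maxent_exact KL_uniform_on)
  have "?G - cells Y = (?G - cells M) \<union> (cells M - cells Y)"
    using cells_subset_grid[of M n m] tiles \<open>Y \<subseteq> M\<close> by (auto simp: cells_def)
  also have "card \<dots> = card (?G - cells M) + card (cells M - cells Y)"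
    using finite_cells[of M n m] tiles by (intro card_Un_disjoint) auto
  finally have "card (?G - cells Y) = card (?G - cells M) + card (cells M - cells Y)" .
  then have "card (consistent_mats n m alpha Y) =
      card (consistent_mats n m alpha M) * 2 ^ card (cells M - cells Y)"
    using card_consistent_mats[OF tiles D0] card_consistent_mats[OF tiles_Y D0_Y]
    by (simp add: power_add)
  then show ?thesis
    using KL_card card_consistent_mats[OF tiles D0] by (simp add: ln_realpow)
qed

text \<open>The value 1 for two empty sets matches the convention of d for a vanishing denominator.\<close>
definition jaccard_dist :: "'a set \<Rightarrow> 'a set \<Rightarrow> real" where
  "jaccard_dist A C =
    (if A \<union> C = {} then 1 else real (card (A - C) + card (C - A)) / real (card (A \<union> C)))"

lemma card_sym_diff_le_card_Un:
  assumes "finite A" and "finite C"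
  shows "card (A - C) + card (C - A) \<le> card (A \<union> C)"
proof -
  have "card (A - C) + card (C - A) = card ((A - C) \<union> (C - A))"
    using assms by (intro card_Un_disjoint[symmetric]) auto
  also have "\<dots> \<le> card (A \<union> C)"
    using assms by (intro card_mono) auto
  finally show ?thesis .
qed

lemma jaccard_dist_nonneg: "0 \<le> jaccard_dist A C"
  by (simp add: jaccard_dist_def)

lemma jaccard_dist_le_1:
  assumes "finite A" and "finite C"
  shows "jaccard_dist A C \<le> 1"
  using card_sym_diff_le_card_Un[OF assms]
  by (auto simp: jaccard_dist_def divide_le_eq_1 simp flip: of_nat_add)

text \<open>Counted pointwise over \<open>A \<union> B \<union> C\<close>: an element of \<open>B\<close> outside \<open>A \<union> C\<close> lies in
both symmetric differences on the right.\<close>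
lemma card_sym_diff_triangle:
  assumes "finite A" and "finite B" and "finite C"
  shows "card (A - C) + card (C - A) + 2 * card (B - (A \<union> C))
    \<le> card (A - B) + card (B - A) + card (B - C) + card (C - B)"
proof -
  let ?W = "A \<union> B \<union> C"
  have count: "card X = (\<Sum>x\<in>?W. of_bool (x \<in> X))" if "X \<subseteq> ?W" for X
  proof -
    have "?W \<inter> {x. x \<in> X} = X" using that by blast
    then show ?thesis using assms by simp
  qed
  have "(\<Sum>x\<in>?W. of_bool (x \<in> A - C) + of_bool (x \<in> C - A) + 2 * of_bool (x \<in> B - (A \<union> C)))
      \<le> (\<Sum>x\<in>?W. of_bool (x \<in> A - B) + of_bool (x \<in> B - A) + of_bool (x \<in> B - C)
          + of_bool (x \<in> C - B) :: nat)"
    by (intro sum_mono) auto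
  moreover have "A - C \<subseteq> ?W" "C - A \<subseteq> ?W" "B - (A \<union> C) \<subseteq> ?W" "A - B \<subseteq> ?W"
    "B - A \<subseteq> ?W" "B - C \<subseteq> ?W" "C - B \<subseteq> ?W"
    by auto
  ultimately show ?thesis
    by (simp only: count sum.distrib sum_distrib_left)
qed

lemma jaccard_dist_empty_left: "finite B \<Longrightarrow> B \<noteq> {} \<Longrightarrow> jaccard_dist {} B = 1"
  by (simp add: jaccard_dist_def)

lemma jaccard_dist_triangle:
  assumes "finite A" and "finite B" and "finite C"
  shows "jaccard_dist A C \<le> jaccard_dist A B + jaccard_dist B C"
proof (cases "A \<union> B = {} \<or> B \<union> C = {} \<or> A \<union> C = {}")
  case True
  then consider "A \<union> B = {}" | "B \<union> C = {}" | "A = {}" "B \<noteq> {}" by blast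
  then have "jaccard_dist A B = 1 \<or> jaccard_dist B C = 1"
    by cases (simp_all add: jaccard_dist_def jaccard_dist_empty_left \<open>finite B\<close>)
  then show ?thesis
    using jaccard_dist_le_1[of A C] jaccard_dist_nonneg[of A B] jaccard_dist_nonneg[of B C] assms
    by linarith
next
  case False
  define P Q R W where "P = real (card (A \<union> C))" and "Q = real (card (A \<union> B))"
    and "R = real (card (B \<union> C))" and "W = real (card (A \<union> B \<union> C))"
  define x y z e where "x = real (card (A - C) + card (C - A))"
    and "y = real (card (A - B) + card (B - A))" and "z = real (card (B - C) + card (C - B))"
    and "e = real (card (B - (A \<union> C)))"
  have "0 < P" "0 < Q" "0 < R"
    using False assms by (simp_all add: P_def Q_def R_def card_gt_0_iff)
  have "Q \<le> W" "R \<le> W"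
    using assms by (auto simp: Q_def R_def W_def intro!: card_mono)
  have "card (A \<union> B \<union> C) = card ((A \<union> C) \<union> (B - (A \<union> C)))"
    by (rule arg_cong[where f = card]) blast
  also have "\<dots> = card (A \<union> C) + card (B - (A \<union> C))"
    using assms by (intro card_Un_disjoint) auto
  finally have "W = P + e"
    by (simp add: W_def P_def e_def)
  have "x \<le> P" "0 \<le> e"
    using card_sym_diff_le_card_Un[OF assms(1,3)] by (simp_all add: x_def P_def e_def)
  have "x + 2 * e \<le> y + z"
    using card_sym_diff_triangle[OF assms] unfolding x_def y_def z_def e_def
    by (simp flip: of_nat_add of_nat_mult)
  have "x * e \<le> P * e"
    using \<open>x \<le> P\<close> \<open>0 \<le> e\<close> by (rule mult_right_mono)
  moreover have "0 \<le> P * e"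
    using \<open>0 < P\<close> \<open>0 \<le> e\<close> by simp
  ultimately have "x * (P + e) \<le> (x + 2 * e) * P"
    by (simp add: algebra_simps)
  then have "x / P \<le> (x + 2 * e) / (P + e)"
    using \<open>0 < P\<close> \<open>0 \<le> e\<close> by (simp add: divide_simps add_pos_nonneg)
  also have "\<dots> \<le> y / W + z / W"
    using \<open>x + 2 * e \<le> y + z\<close> \<open>W = P + e\<close> \<open>0 < P\<close> \<open>0 \<le> e\<close>
    by (simp add: divide_right_mono flip: add_divide_distrib)
  also have "\<dots> \<le> y / Q + z / R"
    using \<open>0 < Q\<close> \<open>0 < R\<close> \<open>Q \<le> W\<close> \<open>R \<le> W\<close>
    by (intro add_mono divide_left_mono) (simp_all add: y_def z_def)
  finally show ?thesis
    using False by (simp add: jaccard_dist_def x_def y_def z_def P_def Q_def R_def)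
qed

lemma dd_exact_eq_jaccard_dist:
  assumes tiles: "\<forall>T\<in>\<T> \<union> \<U> \<union> \<B>. is_tile n m T \<and> exact alpha T"
    and D0: "D0 \<in> consistent_mats n m alpha (\<T> \<union> \<U> \<union> \<B>)"
  shows "dd n m alpha \<T> \<U> \<B> = jaccard_dist (cells \<T> - cells \<B>) (cells \<U> - cells \<B>)"
proof -
  let ?M = "\<T> \<union> \<U> \<union> \<B>" and ?t = "cells \<T> - cells \<B>" and ?u = "cells \<U> - cells \<B>"
  have cells_diff: "cells ?M - cells (\<U> \<union> \<B>) = ?t - ?u"
    "cells ?M - cells (\<T> \<union> \<B>) = ?u - ?t" "cells ?M - cells \<B> = ?t \<union> ?u"
    by (auto simp: cells_Un)
  have KL_UB: "KLt n m alpha ?M (\<U> \<union> \<B>) = real (card (?t - ?u)) * ln 2"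
    unfolding cells_diff(1)[symmetric] by (rule KLt_exact[OF tiles D0]) blast
  have KL_TB: "KLt n m alpha ?M (\<T> \<union> \<B>) = real (card (?u - ?t)) * ln 2"
    unfolding cells_diff(2)[symmetric] by (rule KLt_exact[OF tiles D0]) blast
  have KL_B: "KLt n m alpha ?M \<B> = real (card (?t \<union> ?u)) * ln 2"
    unfolding cells_diff(3)[symmetric] by (rule KLt_exact[OF tiles D0]) blast
  have "finite (?t \<union> ?u)"
    using finite_cells[of ?M n m] tiles by (auto simp: cells_Un)
  show ?thesis
  proof (cases "?t \<union> ?u = {}")
    case False
    with \<open>finite (?t \<union> ?u)\<close> have "KLt n m alpha ?M \<B> \<noteq> 0"
      using KL_B by simp
    then have "dd n m alpha \<T> \<U> \<B> = (real (card (?t - ?u)) * ln 2 + real (card (?u - ?t)) * ln 2)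
        / (real (card (?t \<union> ?u)) * ln 2)"
      using KL_UB KL_TB KL_B by (simp add: dd_def Let_def)
    also have "\<dots> = jaccard_dist ?t ?u"
      unfolding jaccard_dist_def if_not_P[OF False] by (simp flip: distrib_right)
    finally show ?thesis .
  next
    case True
    then have "KLt n m alpha ?M \<B> = 0" using KL_B unfolding True by simp
    then show ?thesis
      unfolding dd_def Let_def jaccard_dist_def if_P[OF True] by simp
  qed
qed

lemma consistent_mats_nonempty_if_feasible:
  assumes "\<forall>T\<in>X. exact alpha T" and "feasible n m alpha X \<noteq> {}"
  shows "consistent_mats n m alpha X \<noteq> {}"
proof -
  obtain p where "p \<in> feasible n m alpha X" using assms(2) by blast
  then have p: "is_dist n m p" "\<forall>D. p D \<noteq> 0 \<longrightarrow> D \<in> consistent_mats n m alpha X"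
    using feasible_exact_iff[OF assms(1)] by blast+
  have "\<exists>D. p D \<noteq> 0"
    using p(1) unfolding is_dist_def by (metis sum.neutral zero_neq_one)
  then show ?thesis using p(2) by blast
qed

theorem theorem8:
  fixes n m :: nat and alpha :: "tile \<Rightarrow> real" and \<S> \<T> \<U> \<B> :: "tile set"
  assumes "1 \<le> n" and "1 \<le> m"
    and "\<forall>T\<in>\<S> \<union> \<T> \<union> \<U> \<union> \<B>. is_tile n m T \<and> exact alpha T"
    and "feasible n m alpha (\<S> \<union> \<T> \<union> \<U> \<union> \<B>) \<noteq> {}"
  shows "dd n m alpha \<T> \<U> \<B> \<le> dd n m alpha \<T> \<S> \<B> + dd n m alpha \<S> \<U> \<B>"
proof -
  let ?F = "\<S> \<union> \<T> \<union> \<U> \<union> \<B>"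
  obtain D0 where D0: "D0 \<in> consistent_mats n m alpha ?F"
    using consistent_mats_nonempty_if_feasible assms(3,4) by blast
  have dd_eq: "dd n m alpha X Y \<B> = jaccard_dist (cells X - cells \<B>) (cells Y - cells \<B>)"
    if "X \<subseteq> ?F" and "Y \<subseteq> ?F" for X Y
  proof (rule dd_exact_eq_jaccard_dist)
    show "\<forall>T\<in>X \<union> Y \<union> \<B>. is_tile n m T \<and> exact alpha T"
      using assms(3) that by blast
    show "D0 \<in> consistent_mats n m alpha (X \<union> Y \<union> \<B>)"
      using D0 consistent_mats_antimono[of "X \<union> Y \<union> \<B>" ?F] that by blast
  qed
  have sub: "\<S> \<subseteq> ?F" "\<T> \<subseteq> ?F" "\<U> \<subseteq> ?F" by auto
  have fin: "finite (cells X - cells \<B>)" if "X \<subseteq> ?F" for X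
    using finite_cells[of X n m] assms(3) that by blast
  show ?thesis
    unfolding dd_eq[OF sub(2,3)] dd_eq[OF sub(2,1)] dd_eq[OF sub(1,3)]
    by (intro jaccard_dist_triangle fin sub)
qed

end
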